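(* Let $X=(X,d,\mu)$ be a metric measure space with $\mu$ uniformly locally doubling, and let $\theta\ge0$. Then $\mathcal{ADR}_\theta(X)\subset\mathcal{LCR}_\theta(X)$.
   Context: A metric measure space is a triple $X=(X,d,\mu)$ with $(X,d)$ a complete separable metric space and $\mu$ a Borel regular measure with $0<\mu(B)<\infty$ for every ball $B$ and $\operatorname{supp}\mu=X$. All balls are closed: $B_r(x)=\{y:d(x,y)\le r\}$. $\mu$ is uniformly locally doubling if for every $R>0$, $\sup_{r\in(0,R]}\sup_{x}\mu(B_{2r}(x))/\mu(B_r(x))<\infty$. For $\theta\ge0$, $E\subset X$, $\delta\in(0,\infty]$: $\mathcal H_{\theta,\delta}(E)=\inf\{\sum_i\mu(B_{r_i}(x_i))/r_i^\theta:E\subset\bigcup_iB_{r_i}(x_i),\ r_i<\delta\}$ (at most countable coverings by balls), $\mathcal H_\theta(E)=\lim_{\delta\to0}\mathcal H_{\theta,\delta}(E)$. $S\in\mathcal{ADR}_\theta(X)$ (codimension-$\theta$ Ahlfors–David regular) if there are $c_1,c_2>0$ with $c_1\mu(B_r(x))/r^\theta\le\mathcal H_\theta(B_r(x)\cap S)\le c_2\mu(B_r(x))/r^\theta$ for all $x\in S$, $r\in(0,1]$. $S\in\mathcal{LCR}_\theta(X)$ (lower codimension-$\theta$ content regular) if there is $\lambda>0$ with $\mathcal H_{\theta,r}(B_r(x)\cap S)\ge\lambda\mu(B_r(x))/r^\theta$ for all $x\in S$, $r\in(0,1]$. *)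

theory Defs
  imports "HOL-Analysis.Analysis"
begin

text \<open>A metric measure space: the ambient type is a complete separable metric space
  (class polish_space), the measure lives on the Borel sets, and every closed ball
  of positive radius has positive finite measure (hence supp mu = X).\<close>
definition mms :: "'a::polish_space measure \<Rightarrow> bool" where
  "mms M \<longleftrightarrow> sets M = sets borel \<and>
     (\<forall>x r. r > 0 \<longrightarrow> 0 < emeasure M (cball x r) \<and> emeasure M (cball x r) < \<infinity>)"

definition unif_loc_doubling :: "'a::metric_space measure \<Rightarrow> bool" where
  "unif_loc_doubling M \<longleftrightarrow>
     (\<forall>R>0. \<exists>C::real. \<forall>r\<in>{0<..R}. \<forall>x.
        measure M (cball x (2*r)) / measure M (cball x r) \<le> C)"

text \<open>Codimension-theta Hausdorff content at scale delta: infimum over at most countable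
  coverings by closed balls (indexed by a subset I of nat) with radii 0 < r_i < delta.\<close>
definition hcontent :: "'a::metric_space measure \<Rightarrow> real \<Rightarrow> real \<Rightarrow> 'a set \<Rightarrow> ennreal" where
  "hcontent M \<theta> \<delta> E = (INF c \<in> {(I, x, r). (\<forall>i\<in>I. 0 < r i \<and> r i < \<delta>) \<and>
                                         E \<subseteq> (\<Union>i\<in>I. cball (x i) (r i))}.
       (case c of (I, x, r) \<Rightarrow>
          (\<Sum>\<^sub>\<infinity> i\<in>(I::nat set). emeasure M (cball ((x::nat\<Rightarrow>'a) i) ((r::nat\<Rightarrow>real) i)) / ennreal (r i powr \<theta>))))"

text \<open>H_theta(E) = lim_{delta -> 0} H_{theta,delta}(E); the content is antitone in delta,
  so the limit equals the supremum over delta > 0.\<close>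
definition hmeasure :: "'a::metric_space measure \<Rightarrow> real \<Rightarrow> 'a set \<Rightarrow> ennreal" where
  "hmeasure M \<theta> E = (SUP \<delta>\<in>{0<..}. hcontent M \<theta> \<delta> E)"

definition ADR :: "'a::metric_space measure \<Rightarrow> real \<Rightarrow> 'a set set" where
  "ADR M \<theta> = {S. \<exists>c1>0. \<exists>c2>0. \<forall>x\<in>S. \<forall>r\<in>{0<..1}.
      ennreal c1 * emeasure M (cball x r) / ennreal (r powr \<theta>) \<le> hmeasure M \<theta> (cball x r \<inter> S) \<and>
      hmeasure M \<theta> (cball x r \<inter> S) \<le> ennreal c2 * emeasure M (cball x r) / ennreal (r powr \<theta>)}"

definition LCR :: "'a::metric_space measure \<Rightarrow> real \<Rightarrow> 'a set set" where
  "LCR M \<theta> = {S. \<exists>lam>0. \<forall>x\<in>S. \<forall>r\<in>{0<..1}.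
      hcontent M \<theta> r (cball x r \<inter> S) \<ge> ennreal lam * emeasure M (cball x r) / ennreal (r powr \<theta>)}"

end

theory Submission
  imports Defs "HOL-Library.Nat_Bijection"
begin

text \<open>Let \<open>S\<close> be codimension-\<open>\<theta>\<close> Ahlfors--David regular with constants \<open>c\<^sub>1, c\<^sub>2\<close>, let
  \<open>x \<in> S\<close>, \<open>0 < r \<le> 1\<close>, and cover \<open>E = B\<^sub>r(x) \<inter> S\<close> by balls \<open>B\<^sub>\<rho>(y)\<close> with \<open>\<rho> < r\<close>.
  A ball meeting \<open>E\<close> in a point \<open>z\<close> has its part of \<open>E\<close> inside \<open>B\<^sub>2\<^sub>\<rho>(z) \<inter> S\<close> if \<open>2\<rho> \<le> r\<close>, and
  trivially inside \<open>B\<^sub>r(x) \<inter> S\<close> otherwise; both balls lie in \<open>B\<^sub>8\<^sub>\<rho>(y)\<close>, so the upper ADR bound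
  and three doublings give \<open>\<H>\<^sub>\<theta>(B\<^sub>\<rho>(y) \<inter> E) \<le> c\<^sub>2 D\<^sup>3 \<mu>(B\<^sub>\<rho>(y)) / \<rho>\<^sup>\<theta>\<close>.
  Summing over the cover with the countable subadditivity of \<open>\<H>\<^sub>\<theta>\<close> and comparing with the
  lower ADR bound \<open>c\<^sub>1 \<mu>(B\<^sub>r(x)) / r\<^sup>\<theta> \<le> \<H>\<^sub>\<theta>(E)\<close> bounds the cost of every admissible cover, hence
  \<open>\<H>\<^sub>\<theta>\<^sub>,\<^sub>r(E)\<close>, from below by \<open>c\<^sub>1 / (c\<^sub>2 D\<^sup>3) \<cdot> \<mu>(B\<^sub>r(x)) / r\<^sup>\<theta>\<close>.\<close>

lemma infsum_cmult_right_ennreal: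
  fixes f :: "'b \<Rightarrow> ennreal"
  assumes "c < top"
  shows "(\<Sum>\<^sub>\<infinity>i\<in>A. c * f i) = c * (\<Sum>\<^sub>\<infinity>i\<in>A. f i)"
proof -
  have "((\<lambda>y. c * y) \<circ> f has_sum c * infsum f A) A"
    by (rule has_sum_comm_additive_general)
       (auto simp: sum_distrib_left nonneg_summable_on_complete
             intro!: ennreal_tendsto_cmult assms tendsto_ident_at has_sum_infsum)
  then show ?thesis by (simp add: infsumI o_def)
qed

lemma sum_le_infsum_ennreal:
  fixes f :: "'b \<Rightarrow> ennreal"
  assumes "finite F" "F \<subseteq> A"
  shows "sum f F \<le> infsum f A"
  using infsum_mono_neutral[of f F f A] assms by (auto simp: nonneg_summable_on_complete)

lemma infsum_Sigma_le_ennreal: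
  fixes f :: "'a \<Rightarrow> 'b \<Rightarrow> ennreal"
  shows "(\<Sum>\<^sub>\<infinity>(i, j)\<in>Sigma A B. f i j) \<le> (\<Sum>\<^sub>\<infinity>i\<in>A. \<Sum>\<^sub>\<infinity>j\<in>B i. f i j)"
proof -
  have "(\<Sum>\<^sub>\<infinity>(i, j)\<in>Sigma A B. f i j) = (SUP F\<in>{F. finite F \<and> F \<subseteq> Sigma A B}. \<Sum>(i, j)\<in>F. f i j)"
    by (rule nonneg_infsum_complete) auto
  also have "\<dots> \<le> (\<Sum>\<^sub>\<infinity>i\<in>A. \<Sum>\<^sub>\<infinity>j\<in>B i. f i j)"
  proof (rule SUP_least)
    fix F assume F: "F \<in> {F. finite F \<and> F \<subseteq> Sigma A B}"
    define A' where "A' = fst ` F"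
    define B' where "B' i = {j. (i, j) \<in> F}" for i
    have fin: "finite A'" using F by (auto simp: A'_def)
    have finB: "finite (B' i)" for i
    proof -
      have "B' i \<subseteq> snd ` F" by (force simp: B'_def)
      then show ?thesis using F finite_subset by blast
    qed
    have F_eq: "F = Sigma A' B'" by (force simp: A'_def B'_def)
    have "(\<Sum>(i, j)\<in>F. f i j) = (\<Sum>i\<in>A'. sum (f i) (B' i))"
      unfolding F_eq by (rule sum.Sigma[symmetric]) (use fin finB in auto)
    also have "\<dots> \<le> (\<Sum>i\<in>A'. \<Sum>\<^sub>\<infinity>j\<in>B i. f i j)"
      by (rule sum_mono, rule sum_le_infsum_ennreal) (use F finB in \<open>auto simp: A'_def B'_def\<close>)
    also have "\<dots> \<le> (\<Sum>\<^sub>\<infinity>i\<in>A. \<Sum>\<^sub>\<infinity>j\<in>B i. f i j)"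
      using F fin by (intro sum_le_infsum_ennreal) (auto simp: A'_def)
    finally show "(\<Sum>(i, j)\<in>F. f i j) \<le> (\<Sum>\<^sub>\<infinity>i\<in>A. \<Sum>\<^sub>\<infinity>j\<in>B i. f i j)" .
  qed
  finally show ?thesis .
qed

lemma infsum_geometric_le_ennreal:
  assumes "0 < e"
  shows "(\<Sum>\<^sub>\<infinity>i\<in>A. ennreal (e * (1/2) ^ Suc i)) \<le> ennreal e"
proof -
  have "(\<lambda>i. e * (1/2) ^ Suc i) sums e"
    using sums_mult[OF power_half_series, of e] by simp
  then have "((\<lambda>i. e * (1/2) ^ Suc i) has_sum e) UNIV"
    using assms by (intro sums_nonneg_imp_has_sum) auto
  then have "(ennreal \<circ> (\<lambda>i. e * (1/2) ^ Suc i) has_sum ennreal e) UNIV"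
    by (rule has_sum_comm_additive_general[rotated 2])
       (use assms in \<open>auto intro!: tendsto_ennrealI tendsto_ident_at\<close>)
  then have "(\<Sum>\<^sub>\<infinity>i\<in>UNIV. ennreal (e * (1/2) ^ Suc i)) = ennreal e"
    by (simp add: infsumI o_def)
  moreover have "(\<Sum>\<^sub>\<infinity>i\<in>A. ennreal (e * (1/2) ^ Suc i)) \<le> (\<Sum>\<^sub>\<infinity>i\<in>UNIV. ennreal (e * (1/2) ^ Suc i))"
    by (rule infsum_mono_neutral) (auto simp: nonneg_summable_on_complete)
  ultimately show ?thesis by simp
qed

lemma divide_ennreal_antimono: "0 < a \<Longrightarrow> a \<le> b \<Longrightarrow> x / ennreal b \<le> x / ennreal a"
  by (simp add: divide_ennreal_def inverse_ennreal ennreal_leI le_imp_inverse_le mult_left_mono)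

definition ball_covers :: "real \<Rightarrow> 'a::metric_space set \<Rightarrow> (nat set \<times> (nat \<Rightarrow> 'a) \<times> (nat \<Rightarrow> real)) set" where
  "ball_covers \<delta> E = {(I, x, r). (\<forall>i\<in>I. 0 < r i \<and> r i < \<delta>) \<and> E \<subseteq> (\<Union>i\<in>I. cball (x i) (r i))}"

definition cover_cost :: "'a::metric_space measure \<Rightarrow> real \<Rightarrow> nat set \<times> (nat \<Rightarrow> 'a) \<times> (nat \<Rightarrow> real) \<Rightarrow> ennreal" where
  "cover_cost M \<theta> c = (case c of (I, x, r) \<Rightarrow>
     (\<Sum>\<^sub>\<infinity>i\<in>I. emeasure M (cball (x i) (r i)) / ennreal (r i powr \<theta>)))"

lemma hcontent_eq_INF_cover_cost: "hcontent M \<theta> \<delta> E = (INF c\<in>ball_covers \<delta> E. cover_cost M \<theta> c)"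
  unfolding hcontent_def ball_covers_def cover_cost_def by simp

lemma hcontent_le_cover_cost: "c \<in> ball_covers \<delta> E \<Longrightarrow> hcontent M \<theta> \<delta> E \<le> cover_cost M \<theta> c"
  unfolding hcontent_eq_INF_cover_cost by (rule INF_lower)

lemma hcontent_empty: "hcontent M \<theta> \<delta> {} = 0"
  using hcontent_le_cover_cost[of "({}, undefined, undefined)" \<delta> "{}" M \<theta>]
  by (simp add: ball_covers_def cover_cost_def)

lemma hcontent_le_infsum_cover_cost:
  fixes A :: "nat \<Rightarrow> 'a::metric_space set"
    and C :: "nat \<Rightarrow> nat set \<times> (nat \<Rightarrow> 'a) \<times> (nat \<Rightarrow> real)"
  assumes E: "E \<subseteq> (\<Union>i\<in>I. A i)" and C: "\<And>i. i \<in> I \<Longrightarrow> C i \<in> ball_covers \<delta> (A i)"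
  shows "hcontent M \<theta> \<delta> E \<le> (\<Sum>\<^sub>\<infinity>i\<in>I. cover_cost M \<theta> (C i))"
proof -
  define J where "J i = fst (C i)" for i
  define X where "X i = fst (snd (C i))" for i
  define R where "R i = snd (snd (C i))" for i
  have CJ: "C i = (J i, X i, R i)" for i by (simp add: J_def X_def R_def)
  have R: "\<And>j. j \<in> J i \<Longrightarrow> 0 < R i j \<and> R i j < \<delta>"
    and cov: "A i \<subseteq> (\<Union>j\<in>J i. cball (X i j) (R i j))" if "i \<in> I" for i
    using C[OF that] unfolding CJ ball_covers_def by auto
  define g where "g i j = emeasure M (cball (X i j) (R i j)) / ennreal (R i j powr \<theta>)" for i j
  let ?x = "\<lambda>n. X (fst (prod_decode n)) (snd (prod_decode n))"
  let ?r = "\<lambda>n. R (fst (prod_decode n)) (snd (prod_decode n))"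
  have "(prod_encode ` Sigma I J, ?x, ?r) \<in> ball_covers \<delta> E"
    using R E cov unfolding ball_covers_def by (fastforce simp: image_iff)
  then have "hcontent M \<theta> \<delta> E \<le> cover_cost M \<theta> (prod_encode ` Sigma I J, ?x, ?r)"
    by (rule hcontent_le_cover_cost)
  also have "\<dots> = (\<Sum>\<^sub>\<infinity>(i, j)\<in>Sigma I J. g i j)"
    by (simp add: cover_cost_def infsum_reindex[OF inj_prod_encode] o_def g_def split_def)
  also have "\<dots> \<le> (\<Sum>\<^sub>\<infinity>i\<in>I. \<Sum>\<^sub>\<infinity>j\<in>J i. g i j)"
    by (rule infsum_Sigma_le_ennreal)
  also have "\<dots> = (\<Sum>\<^sub>\<infinity>i\<in>I. cover_cost M \<theta> (C i))"
    by (simp add: CJ cover_cost_def g_def)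
  finally show ?thesis .
qed

lemma hcontent_countably_subadditive:
  fixes A :: "nat \<Rightarrow> 'a::metric_space set"
  assumes E: "E \<subseteq> (\<Union>i\<in>I. A i)"
  shows "hcontent M \<theta> \<delta> E \<le> (\<Sum>\<^sub>\<infinity>i\<in>I. hcontent M \<theta> \<delta> (A i))"
proof (rule ennreal_le_epsilon)
  fix e :: real
  assume fin: "(\<Sum>\<^sub>\<infinity>i\<in>I. hcontent M \<theta> \<delta> (A i)) < top" and e: "0 < e"
  define \<epsilon> where "\<epsilon> i = ennreal (e * (1/2) ^ Suc i)" for i
  have "\<exists>c. c \<in> ball_covers \<delta> (A i) \<and> cover_cost M \<theta> c < hcontent M \<theta> \<delta> (A i) + \<epsilon> i"
    if i: "i \<in> I" for i
  proof -
    have "hcontent M \<theta> \<delta> (A i) < top"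
      using sum_le_infsum_ennreal[where f="\<lambda>i. hcontent M \<theta> \<delta> (A i)" and F="{i}" and A=I] i fin
      by auto
    then have "hcontent M \<theta> \<delta> (A i) < hcontent M \<theta> \<delta> (A i) + \<epsilon> i"
      using e by (simp add: \<epsilon>_def)
    then show ?thesis
      unfolding hcontent_eq_INF_cover_cost[of M \<theta> \<delta> "A i"] INF_less_iff by blast
  qed
  then have "\<forall>i\<in>I. \<exists>c. c \<in> ball_covers \<delta> (A i) \<and> cover_cost M \<theta> c < hcontent M \<theta> \<delta> (A i) + \<epsilon> i"
    by blast
  from bchoice[OF this] obtain C
    where C: "\<forall>i\<in>I. C i \<in> ball_covers \<delta> (A i) \<and> cover_cost M \<theta> (C i) < hcontent M \<theta> \<delta> (A i) + \<epsilon> i"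
    by blast
  have "hcontent M \<theta> \<delta> E \<le> (\<Sum>\<^sub>\<infinity>i\<in>I. cover_cost M \<theta> (C i))"
    using E C by (intro hcontent_le_infsum_cover_cost) auto
  also have "\<dots> \<le> (\<Sum>\<^sub>\<infinity>i\<in>I. hcontent M \<theta> \<delta> (A i) + \<epsilon> i)"
    using C by (intro infsum_mono) (auto simp: nonneg_summable_on_complete less_imp_le)
  also have "\<dots> = (\<Sum>\<^sub>\<infinity>i\<in>I. hcontent M \<theta> \<delta> (A i)) + (\<Sum>\<^sub>\<infinity>i\<in>I. \<epsilon> i)"
    by (rule infsum_add) (auto simp: nonneg_summable_on_complete)
  also have "\<dots> \<le> (\<Sum>\<^sub>\<infinity>i\<in>I. hcontent M \<theta> \<delta> (A i)) + ennreal e"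
    unfolding \<epsilon>_def using e by (intro add_left_mono infsum_geometric_le_ennreal)
  finally show "hcontent M \<theta> \<delta> E \<le> (\<Sum>\<^sub>\<infinity>i\<in>I. hcontent M \<theta> \<delta> (A i)) + ennreal e" .
qed

lemma hcontent_mono: "E \<subseteq> F \<Longrightarrow> hcontent M \<theta> \<delta> E \<le> hcontent M \<theta> \<delta> F"
  unfolding hcontent_eq_INF_cover_cost by (rule INF_superset_mono) (auto simp: ball_covers_def)

lemma hcontent_le_hmeasure: "0 < \<delta> \<Longrightarrow> hcontent M \<theta> \<delta> E \<le> hmeasure M \<theta> E"
  unfolding hmeasure_def by (rule SUP_upper) auto

lemma hmeasure_mono: "E \<subseteq> F \<Longrightarrow> hmeasure M \<theta> E \<le> hmeasure M \<theta> F"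
  unfolding hmeasure_def by (rule SUP_mono) (auto intro: hcontent_mono)

lemma hmeasure_empty: "hmeasure M \<theta> {} = 0"
  by (simp add: hmeasure_def hcontent_empty)

lemma hmeasure_countably_subadditive:
  fixes A :: "nat \<Rightarrow> 'a::metric_space set"
  assumes "E \<subseteq> (\<Union>i\<in>I. A i)"
  shows "hmeasure M \<theta> E \<le> (\<Sum>\<^sub>\<infinity>i\<in>I. hmeasure M \<theta> (A i))"
  unfolding hmeasure_def[of M \<theta> E]
proof (rule SUP_least)
  fix \<delta> :: real assume "\<delta> \<in> {0<..}"
  then have "hcontent M \<theta> \<delta> E \<le> (\<Sum>\<^sub>\<infinity>i\<in>I. hcontent M \<theta> \<delta> (A i))"
    "(\<Sum>\<^sub>\<infinity>i\<in>I. hcontent M \<theta> \<delta> (A i)) \<le> (\<Sum>\<^sub>\<infinity>i\<in>I. hmeasure M \<theta> (A i))"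
    using assms by (auto intro!: hcontent_countably_subadditive infsum_mono hcontent_le_hmeasure
                         simp: nonneg_summable_on_complete)
  then show "hcontent M \<theta> \<delta> E \<le> (\<Sum>\<^sub>\<infinity>i\<in>I. hmeasure M \<theta> (A i))" by order
qed

lemma hcontent_lower_bound_of_cball_bound:
  assumes "0 < K"
    and local_bound: "\<And>y \<rho>. 0 < \<rho> \<Longrightarrow> \<rho> < \<delta> \<Longrightarrow>
      hmeasure M \<theta> (cball y \<rho> \<inter> E) \<le> ennreal K * emeasure M (cball y \<rho>) / ennreal (\<rho> powr \<theta>)"
  shows "ennreal (1 / K) * hmeasure M \<theta> E \<le> hcontent M \<theta> \<delta> E"
  unfolding hcontent_eq_INF_cover_cost
proof (rule INF_greatest)
  fix c assume "c \<in> ball_covers \<delta> E"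
  then obtain I y \<rho> where c: "c = (I, y, \<rho>)" and \<rho>: "\<And>i. i \<in> I \<Longrightarrow> 0 < \<rho> i \<and> \<rho> i < \<delta>"
    and cov: "E \<subseteq> (\<Union>i\<in>I. cball (y i) (\<rho> i))"
    unfolding ball_covers_def by auto
  have "hmeasure M \<theta> E \<le> (\<Sum>\<^sub>\<infinity>i\<in>I. hmeasure M \<theta> (cball (y i) (\<rho> i) \<inter> E))"
    using cov by (intro hmeasure_countably_subadditive) blast
  also have "\<dots> \<le> (\<Sum>\<^sub>\<infinity>i\<in>I. ennreal K * (emeasure M (cball (y i) (\<rho> i)) / ennreal (\<rho> i powr \<theta>)))"
    using \<rho> by (intro infsum_mono) (auto simp: nonneg_summable_on_complete ennreal_times_divide local_bound)
  also have "\<dots> = ennreal K * cover_cost M \<theta> c"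
    by (simp add: infsum_cmult_right_ennreal c cover_cost_def)
  finally have "ennreal (1 / K) * hmeasure M \<theta> E \<le> ennreal (1 / K) * (ennreal K * cover_cost M \<theta> c)"
    by (rule mult_left_mono) simp
  also have "\<dots> = cover_cost M \<theta> c"
    using \<open>0 < K\<close> by (simp add: mult.assoc[symmetric] ennreal_mult[symmetric])
  finally show "ennreal (1 / K) * hmeasure M \<theta> E \<le> cover_cost M \<theta> c" .
qed

lemma mms_emeasure_cball:
  assumes "mms M" "0 < r"
  shows "emeasure M (cball x r) = ennreal (measure M (cball x r))"
proof -
  have "emeasure M (cball x r) < \<infinity>"
    using assms unfolding mms_def by blast
  then show ?thesis
    by (intro emeasure_eq_ennreal_measure) (metis infinity_ennreal_def less_irrefl)
qed

lemma mms_measure_cball_pos: "mms M \<Longrightarrow> 0 < r \<Longrightarrow> 0 < measure M (cball x r)"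
  using mms_emeasure_cball[of M r x] unfolding mms_def by (metis ennreal_less_zero_iff)

lemma mms_emeasure_cball_mono:
  "mms M \<Longrightarrow> cball x r \<subseteq> cball y s \<Longrightarrow> emeasure M (cball x r) \<le> emeasure M (cball y s)"
  unfolding mms_def by (intro emeasure_mono) auto

lemma doubling_power_bound:
  fixes m :: "real \<Rightarrow> real"
  assumes doubling: "\<And>r. 0 < r \<Longrightarrow> r \<le> R \<Longrightarrow> m (2 * r) \<le> D * m r"
    and "0 \<le> D" "0 < r" "2 ^ n * r \<le> 2 * R"
  shows "m (2 ^ n * r) \<le> D ^ n * m r"
  using assms(4)
proof (induction n)
  case (Suc n)
  have "0 < 2 ^ n * r" "2 ^ n * r \<le> R"
    using Suc.prems \<open>0 < r\<close> by simp_all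
  then have "m (2 ^ Suc n * r) \<le> D * m (2 ^ n * r)"
    using doubling[of "2 ^ n * r"] by (simp add: mult.assoc)
  also have "\<dots> \<le> D * (D ^ n * m r)"
    using \<open>0 < 2 ^ n * r\<close> \<open>2 ^ n * r \<le> R\<close> \<open>0 \<le> D\<close>
    by (intro mult_left_mono Suc.IH) linarith+
  finally show ?case by simp
qed simp

lemma unif_loc_doubling_cball_8:
  assumes "mms M" "unif_loc_doubling M"
  obtains D where "0 < D"
    "\<And>y \<rho>. 0 < \<rho> \<Longrightarrow> \<rho> \<le> 1 \<Longrightarrow> emeasure M (cball y (8 * \<rho>)) \<le> ennreal D * emeasure M (cball y \<rho>)"
proof -
  obtain C where C: "\<And>r y. 0 < r \<Longrightarrow> r \<le> 4 \<Longrightarrow> measure M (cball y (2 * r)) / measure M (cball y r) \<le> C"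
    using assms(2) unfolding unif_loc_doubling_def by (meson greaterThanAtMost_iff zero_less_numeral)
  define D where "D = max C 1"
  have doubling: "measure M (cball y (2 * r)) \<le> D * measure M (cball y r)" if "0 < r" "r \<le> 4" for y r
    using C[OF that, of y] mms_measure_cball_pos[OF assms(1) that(1), of y]
    by (simp add: D_def divide_le_eq) (meson max.cobounded1 mult_right_mono order.trans less_imp_le)
  show thesis
  proof
    show "0 < D ^ 3" by (simp add: D_def)
    fix y and \<rho> :: real assume \<rho>: "0 < \<rho>" "\<rho> \<le> 1"
    have "measure M (cball y (2 ^ 3 * \<rho>)) \<le> D ^ 3 * measure M (cball y \<rho>)"
      using \<rho> by (intro doubling_power_bound[where R=4] doubling) (auto simp: D_def)
    then show "emeasure M (cball y (8 * \<rho>)) \<le> ennreal (D ^ 3) * emeasure M (cball y \<rho>)"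
      using \<rho> by (simp add: mms_emeasure_cball[OF assms(1)] ennreal_mult[symmetric] D_def)
  qed
qed

lemma cball_subset_cball_of_dist:
  assumes "dist x y + r \<le> s"
  shows "cball y r \<subseteq> cball x s"
proof
  fix w assume "w \<in> cball y r"
  then show "w \<in> cball x s"
    using dist_triangle[of x w y] assms by simp
qed

lemma ADR_upper_bound_cball_inter:
  fixes M :: "'a::polish_space measure"
  assumes "mms M" "0 \<le> \<theta>" "0 \<le> c2" "0 \<le> D"
    and upper: "\<And>z s. z \<in> S \<Longrightarrow> 0 < s \<Longrightarrow> s \<le> 1 \<Longrightarrow>
      hmeasure M \<theta> (cball z s \<inter> S) \<le> ennreal c2 * emeasure M (cball z s) / ennreal (s powr \<theta>)"
    and doubling: "\<And>y \<rho>. 0 < \<rho> \<Longrightarrow> \<rho> \<le> 1 \<Longrightarrow>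
      emeasure M (cball y (8 * \<rho>)) \<le> ennreal D * emeasure M (cball y \<rho>)"
    and "x \<in> S" "0 < \<rho>" "\<rho> < r" "r \<le> 1"
  shows "hmeasure M \<theta> (cball y \<rho> \<inter> (cball x r \<inter> S))
    \<le> ennreal (c2 * D) * emeasure M (cball y \<rho>) / ennreal (\<rho> powr \<theta>)"
proof (cases "cball y \<rho> \<inter> (cball x r \<inter> S) = {}")
  case True
  then show ?thesis by (simp add: hmeasure_empty)
next
  case False
  then obtain z where z: "z \<in> S" "dist y z \<le> \<rho>" "dist x z \<le> r" by auto
  obtain w s where "w \<in> S" "\<rho> \<le> s" "s \<le> 1"
    and sub: "cball y \<rho> \<inter> (cball x r \<inter> S) \<subseteq> cball w s \<inter> S"
    and sup: "cball w s \<subseteq> cball y (8 * \<rho>)"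
  proof (cases "2 * \<rho> \<le> r")
    case True
    show thesis
    proof (rule that[of z "2 * \<rho>"])
      show "cball y \<rho> \<inter> (cball x r \<inter> S) \<subseteq> cball z (2 * \<rho>) \<inter> S"
        using cball_subset_cball_of_dist[of z y \<rho> "2 * \<rho>"] z by (auto simp: dist_commute)
      show "cball z (2 * \<rho>) \<subseteq> cball y (8 * \<rho>)"
        using z \<open>0 < \<rho>\<close> by (intro cball_subset_cball_of_dist) simp
    qed (use z True assms in auto)
  next
    case False
    show thesis
    proof (rule that[of x r])
      show "cball x r \<subseteq> cball y (8 * \<rho>)"
        using z False \<open>0 < \<rho>\<close> dist_triangle[of y x z]
        by (intro cball_subset_cball_of_dist) (simp add: dist_commute)
    qed (use assms in auto)
  qed
  have "hmeasure M \<theta> (cball y \<rho> \<inter> (cball x r \<inter> S)) \<le> hmeasure M \<theta> (cball w s \<inter> S)"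
    using sub by (rule hmeasure_mono)
  also have "\<dots> \<le> ennreal c2 * emeasure M (cball w s) / ennreal (s powr \<theta>)"
    using upper \<open>w \<in> S\<close> \<open>\<rho> \<le> s\<close> \<open>s \<le> 1\<close> \<open>0 < \<rho>\<close> by simp
  also have "\<dots> \<le> ennreal c2 * emeasure M (cball y (8 * \<rho>)) / ennreal (\<rho> powr \<theta>)"
    using \<open>0 < \<rho>\<close> \<open>\<rho> \<le> s\<close> \<open>0 \<le> \<theta>\<close>
    by (intro order.trans[OF divide_right_mono_ennreal divide_ennreal_antimono] mult_left_mono
          mms_emeasure_cball_mono[OF \<open>mms M\<close> sup] powr_mono2) auto
  also have "\<dots> \<le> ennreal c2 * (ennreal D * emeasure M (cball y \<rho>)) / ennreal (\<rho> powr \<theta>)"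
    using \<open>0 < \<rho>\<close> \<open>\<rho> < r\<close> \<open>r \<le> 1\<close>
    by (intro divide_right_mono_ennreal mult_left_mono doubling) auto
  finally show ?thesis
    using assms by (simp add: ennreal_mult mult.assoc)
qed

lemma ADRE:
  assumes "S \<in> ADR M \<theta>"
  obtains c1 c2 where "0 < c1" "0 < c2"
    "\<And>x r. x \<in> S \<Longrightarrow> 0 < r \<Longrightarrow> r \<le> 1 \<Longrightarrow>
      ennreal c1 * emeasure M (cball x r) / ennreal (r powr \<theta>) \<le> hmeasure M \<theta> (cball x r \<inter> S)"
    "\<And>x r. x \<in> S \<Longrightarrow> 0 < r \<Longrightarrow> r \<le> 1 \<Longrightarrow>
      hmeasure M \<theta> (cball x r \<inter> S) \<le> ennreal c2 * emeasure M (cball x r) / ennreal (r powr \<theta>)"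
proof -
  from assms obtain c1 c2 where "0 < c1" "0 < c2" and bounds: "\<forall>x\<in>S. \<forall>r\<in>{0<..1}.
      ennreal c1 * emeasure M (cball x r) / ennreal (r powr \<theta>) \<le> hmeasure M \<theta> (cball x r \<inter> S) \<and>
      hmeasure M \<theta> (cball x r \<inter> S) \<le> ennreal c2 * emeasure M (cball x r) / ennreal (r powr \<theta>)"
    unfolding ADR_def by blast
  show thesis
    by (rule that[of c1 c2]) (use \<open>0 < c1\<close> \<open>0 < c2\<close> bounds in auto)
qed

theorem mainTheorem7:
  fixes M :: "'a::polish_space measure" and \<theta> :: real
  assumes "mms M" and "unif_loc_doubling M" and "\<theta> \<ge> 0"
  shows "ADR M \<theta> \<subseteq> LCR M \<theta>"
proof
  fix S assume "S \<in> ADR M \<theta>"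
  then obtain c1 c2 where "0 < c1" "0 < c2" and lower: "\<And>x r. x \<in> S \<Longrightarrow> 0 < r \<Longrightarrow> r \<le> 1 \<Longrightarrow>
      ennreal c1 * emeasure M (cball x r) / ennreal (r powr \<theta>) \<le> hmeasure M \<theta> (cball x r \<inter> S)"
    and upper: "\<And>x r. x \<in> S \<Longrightarrow> 0 < r \<Longrightarrow> r \<le> 1 \<Longrightarrow>
      hmeasure M \<theta> (cball x r \<inter> S) \<le> ennreal c2 * emeasure M (cball x r) / ennreal (r powr \<theta>)"
    by (rule ADRE) blast
  obtain D where "0 < D" and doubling: "\<And>y \<rho>. 0 < \<rho> \<Longrightarrow> \<rho> \<le> 1 \<Longrightarrow>
      emeasure M (cball y (8 * \<rho>)) \<le> ennreal D * emeasure M (cball y \<rho>)"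
    using unif_loc_doubling_cball_8[OF assms(1,2)] by blast
  define K where "K = c2 * D"
  have "0 < K"
    using \<open>0 < c2\<close> \<open>0 < D\<close> by (simp add: K_def)
  have "ennreal (c1 / K) * emeasure M (cball x r) / ennreal (r powr \<theta>) \<le> hcontent M \<theta> r (cball x r \<inter> S)"
    if "x \<in> S" "0 < r" "r \<le> 1" for x r
  proof -
    have "ennreal (c1 / K) = ennreal (1 / K) * ennreal c1"
      using \<open>0 < c1\<close> \<open>0 < K\<close> by (simp flip: ennreal_mult)
    then have "ennreal (c1 / K) * emeasure M (cball x r) / ennreal (r powr \<theta>)
        = ennreal (1 / K) * (ennreal c1 * emeasure M (cball x r) / ennreal (r powr \<theta>))"
      by (simp add: ennreal_times_divide mult.assoc)
    also have "\<dots> \<le> ennreal (1 / K) * hmeasure M \<theta> (cball x r \<inter> S)"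
      using lower that by (intro mult_left_mono) auto
    also have "\<dots> \<le> hcontent M \<theta> r (cball x r \<inter> S)"
      using ADR_upper_bound_cball_inter[OF assms(1,3) _ _ upper doubling \<open>x \<in> S\<close>]
        \<open>0 < K\<close> \<open>0 < c2\<close> \<open>0 < D\<close> \<open>r \<le> 1\<close>
      by (intro hcontent_lower_bound_of_cball_bound) (auto simp: K_def)
    finally show ?thesis .
  qed
  then show "S \<in> LCR M \<theta>"
    using \<open>0 < c1\<close> \<open>0 < K\<close> unfolding LCR_def by (auto intro!: exI[of _ "c1 / K"])
qed

end
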